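(* Let $\boldsymbol{\Theta}_{\mathrm{u}}\subseteq\Theta^N$ contain the true model $\boldsymbol{\theta}^*=(\theta_1^*,\ldots,\theta_N^* )$, let $\eta\le1/(N^2K^2H^2)$ and let UMT-PSR be run with margin $\beta^{(N)}=c\log\big(\mathcal{N}_\eta(\boldsymbol{\Theta}_{\mathrm{u}})NKH/\delta\big)$ for a suitable absolute constant $c$. Then with probability at least $1-\delta$, for every $k\in[K]$ and every $\hat{\boldsymbol{\theta}}=(\hat\theta_1,\ldots,\hat\theta_N)\in\boldsymbol{\mathcal{B}}_k$, \[\sum_{n\le N}\sum_{t\le k-1}\sum_{h\le H}\mathtt{D}_{\mathtt{H}}^2\big(\mathbb{P}^{\nu_h^{\pi^{n,t}}}_{\hat\theta_n},\mathbb{P}^{\nu_h^{\pi^{n,t}}}_{\theta_n^*}\big)\le2\beta^{(N)}.\]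
   Context: Setting: finite $\mathcal{O},\mathcal{A}$, horizon $H$; trajectories $\tau_H=(o_1,a_1,\ldots,o_H,a_H)$; policies $\pi$ with $a_h\sim\pi_h(\cdot\mid\tau_{h-1},o_h)$, $\Pi$ the set of all policies, $\pi(\tau_h)=\prod_{t\le h}\pi(a_t\mid o_t,\tau_{t-1})$; $\mathbb{P}^\pi_\theta$ is the trajectory law of model $\theta$ under $\pi$. $\Theta$ is the set of rank-$r$, $\gamma$-well-conditioned predictive state representations (PSRs); task $n$ has core action sequence sets $\mathcal{Q}_h^{n,A}\subset\mathcal{A}^{H-h}$. $\mathtt{D}_{\mathtt{TV}}(\mathbb{P},\mathbb{Q})=\sum_x|\mathbb{P}(x)-\mathbb{Q}(x)|$; $\mathtt{D}_{\mathtt{H}}^2(\mathbb{P},\mathbb{Q})=1-\sum_x\sqrt{\mathbb{P}(x)\mathbb{Q}(x)}$. Bracketing number: for $\mathbf{l},\mathbf{g}:(\mathcal{O}\times\mathcal{A})^H\to\mathbb{R}_+^N$, the bracket $[\mathbf{l},\mathbf{g}]$ is the set of class members $\mathbf{f}$ with $\mathbf{l}\le\mathbf{f}\le\mathbf{g}$; an $\eta$-bracket has $\max_i\max_{\pi_i}\sum_{\tau_H}|l_i-g_i|(\tau_H)\pi_i(\tau_H)<\eta$; $\mathcal{N}_\eta(\boldsymbol{\Theta}_{\mathrm{u}})$ is the minimal number of $\eta$-brackets covering $\{(\mathbb{P}_{\theta_1},\ldots,\mathbb{P}_{\theta_N}):\boldsymbol{\theta}\in\boldsymbol{\Theta}_{\mathrm{u}}\}$.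 Algorithm UMT-PSR: $\boldsymbol{\mathcal{B}}_1=\boldsymbol{\Theta}_{\mathrm{u}}$; for $k=1,\ldots,K$: $\boldsymbol{\pi}^k\in\arg\max_{\boldsymbol{\pi}\in\Pi^N}\max_{\boldsymbol{\theta},\boldsymbol{\theta}'\in\boldsymbol{\mathcal{B}}_k}\sum_n\mathtt{D}_{\mathtt{TV}}(\mathbb{P}^{\pi^n}_{\theta_n},\mathbb{P}^{\pi^n}_{\theta'_n})$; for each $(n,h)$ draw $\tau_H^{n,k,h}\sim\mathbb{P}^{\nu_h^{\pi^{n,k}}}_{\theta_n^*}$, where $\nu_h^{\pi^{n,k}}$ follows $\pi^{n,k}$ for $h-1$ steps, takes a uniform action at step $h$, then plays a uniformly random core action sequence from $\mathcal{Q}_h^{n,A}$; then $\boldsymbol{\mathcal{B}}_{k+1}=\{\boldsymbol{\theta}\in\boldsymbol{\Theta}_{\mathrm{u}}:\sum_{t\le k,h,n}\log\mathbb{P}^{\nu_h^{\pi^{n,t}}}_{\theta_n}(\tau_H^{n,t,h})\ge\max_{\boldsymbol{\theta}'\in\boldsymbol{\Theta}_{\mathrm{u}}}\sum_{t\le k,h,n}\log\mathbb{P}^{\nu_h^{\pi^{n,t}}}_{\theta'_n}(\tau_H^{n,t,h})-\beta^{(N)}\}\cap\boldsymbol{\mathcal{B}}_k$. *)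

theory Defs
  imports "HOL-Probability.Probability"
begin

(* Observations and actions are natural numbers ranging over finite carriers Obs and Act.
   Act trajectory prefix tau_h = (o_1,a_1,...,o_h,a_h) is a list of (ob,a) pairs in chronological order. *)
type_synonym hist = "(nat \<times> nat) list"

(* A (general sequential) model: law of the next observation o_{h+1} given the history tau_h. *)
type_synonym model = "hist \<Rightarrow> nat pmf"

(* A policy: law of a_h given (tau_{h-1}, o_h). *)
type_synonym policy = "hist \<Rightarrow> nat \<Rightarrow> nat pmf"

definition trajs :: "nat set \<Rightarrow> nat set \<Rightarrow> nat \<Rightarrow> hist set" where
  "trajs Obs Act H = {xs. length xs = H \<and> set xs \<subseteq> Obs \<times> Act}"

definition policies :: "nat set \<Rightarrow> policy set" where
  "policies Act = {\<pi>. \<forall>hs ob. set_pmf (\<pi> hs ob) \<subseteq> Act}"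

definition valid_models :: "nat set \<Rightarrow> model set" where
  "valid_models Obs = {\<theta>. \<forall>hs. set_pmf (\<theta> hs) \<subseteq> Obs}"

fun traj :: "nat \<Rightarrow> model \<Rightarrow> policy \<Rightarrow> hist \<Rightarrow> hist pmf" where
  "traj 0 \<theta> \<pi> hs = return_pmf hs"
| "traj (Suc m) \<theta> \<pi> hs =
     bind_pmf (\<theta> hs) (\<lambda>ob. bind_pmf (\<pi> hs ob) (\<lambda>a. traj m \<theta> \<pi> (hs @ [(ob, a)])))"

definition Plaw :: "nat \<Rightarrow> model \<Rightarrow> policy \<Rightarrow> hist pmf" where
  "Plaw H \<theta> \<pi> = traj H \<theta> \<pi> []"

definition obsprob :: "model \<Rightarrow> hist \<Rightarrow> real" where
  "obsprob \<theta> \<tau> = (\<Prod>t<length \<tau>. pmf (\<theta> (take t \<tau>)) (fst (\<tau> ! t)))"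

definition polprob :: "policy \<Rightarrow> hist \<Rightarrow> real" where
  "polprob \<pi> \<tau> = (\<Prod>t<length \<tau>. pmf (\<pi> (take t \<tau>) (fst (\<tau> ! t))) (snd (\<tau> ! t)))"

definition DTV :: "nat set \<Rightarrow> nat set \<Rightarrow> nat \<Rightarrow> hist pmf \<Rightarrow> hist pmf \<Rightarrow> real" where
  "DTV Obs Act H p q = (\<Sum>x\<in>trajs Obs Act H. \<bar>pmf p x - pmf q x\<bar>)"

definition DH2 :: "nat set \<Rightarrow> nat set \<Rightarrow> nat \<Rightarrow> hist pmf \<Rightarrow> hist pmf \<Rightarrow> real" where
  "DH2 Obs Act H p q = 1 - (\<Sum>x\<in>trajs Obs Act H. sqrt (pmf p x * pmf q x))"

(* Exploration policy nu_h^pi (steps are 1-indexed; the current step is length hs + 1):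
   follow pi for steps < h, uniform action at step h, then at steps > h play the next action of a
   core action sequence drawn uniformly from Q (realised as the conditional law of the next
   action given the already played exploration actions). *)
definition nu :: "nat set \<Rightarrow> nat list set \<Rightarrow> nat \<Rightarrow> policy \<Rightarrow> policy" where
  "nu Act Q h \<pi> hs ob =
     (let t = length hs + 1 in
      if t < h then \<pi> hs ob
      else if t = h then pmf_of_set Act
      else (let played = map snd (drop h hs);
                C = {q\<in>Q. take (t - h - 1) q = played}
            in if C = {} then pmf_of_set Act
               else map_pmf (\<lambda>q. q ! (t - h - 1)) (pmf_of_set C)))"

definition is_eta_bracket ::
  "nat set \<Rightarrow> nat set \<Rightarrow> nat \<Rightarrow> nat \<Rightarrow> real \<Rightarrow>
   ((nat \<Rightarrow> hist \<Rightarrow> real) \<times> (nat \<Rightarrow> hist \<Rightarrow> real)) \<Rightarrow> bool" where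
  "is_eta_bracket Obs Act H N \<eta> b =
     ((\<forall>i<N. \<forall>\<tau>\<in>trajs Obs Act H. 0 \<le> fst b i \<tau> \<and> 0 \<le> snd b i \<tau>) \<and>
      (\<forall>i<N. \<forall>\<pi>\<in>policies Act.
         (\<Sum>\<tau>\<in>trajs Obs Act H. \<bar>fst b i \<tau> - snd b i \<tau>\<bar> * polprob \<pi> \<tau>) < \<eta>))"

definition in_bracket ::
  "nat set \<Rightarrow> nat set \<Rightarrow> nat \<Rightarrow> nat \<Rightarrow>
   ((nat \<Rightarrow> hist \<Rightarrow> real) \<times> (nat \<Rightarrow> hist \<Rightarrow> real)) \<Rightarrow> (nat \<Rightarrow> model) \<Rightarrow> bool" where
  "in_bracket Obs Act H N b \<theta> =
     (\<forall>i<N. \<forall>\<tau>\<in>trajs Obs Act H. fst b i \<tau> \<le> obsprob (\<theta> i) \<tau> \<and> obsprob (\<theta> i) \<tau> \<le> snd b i \<tau>)"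

definition bracket_cover ::
  "nat set \<Rightarrow> nat set \<Rightarrow> nat \<Rightarrow> nat \<Rightarrow> real \<Rightarrow> (nat \<Rightarrow> model) set \<Rightarrow> nat \<Rightarrow> bool" where
  "bracket_cover Obs Act H N \<eta> Tu m =
     (\<exists>brs. length brs = m \<and> (\<forall>b\<in>set brs. is_eta_bracket Obs Act H N \<eta> b) \<and>
            (\<forall>\<theta>\<in>Tu. \<exists>b\<in>set brs. in_bracket Obs Act H N b \<theta>))"

definition bracketing_number ::
  "nat set \<Rightarrow> nat set \<Rightarrow> nat \<Rightarrow> nat \<Rightarrow> real \<Rightarrow> (nat \<Rightarrow> model) set \<Rightarrow> nat" where
  "bracketing_number Obs Act H N \<eta> Tu = (LEAST m. bracket_cover Obs Act H N \<eta> Tu m)"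

(* A record of one round t: the policy tuple pi^t and the data tau^{n,t,h} indexed by (n,h). *)
type_synonym round_rec = "(nat \<Rightarrow> policy) \<times> (nat \<times> nat \<Rightarrow> hist)"

definition elog :: "real \<Rightarrow> ereal" where
  "elog x = (if 0 < x then ereal (ln x) else -\<infinity>)"

definition loglik ::
  "nat set \<Rightarrow> nat \<Rightarrow> nat \<Rightarrow> (nat \<Rightarrow> nat \<Rightarrow> nat list set) \<Rightarrow> (nat \<Rightarrow> model) \<Rightarrow> round_rec list \<Rightarrow> ereal" where
  "loglik Act H N Qc \<theta> recs =
     sum_list (map (\<lambda>r. \<Sum>n<N. \<Sum>h\<in>{1..H}.
        elog (pmf (Plaw H (\<theta> n) (nu Act (Qc n h) h (fst r n))) (snd r (n, h)))) recs)"

(* Bset j recs = B_{j+1}, computed from the first j records. *)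
fun Bset ::
  "nat set \<Rightarrow> nat \<Rightarrow> nat \<Rightarrow> (nat \<Rightarrow> nat \<Rightarrow> nat list set) \<Rightarrow> (nat \<Rightarrow> model) set \<Rightarrow> real \<Rightarrow>
   round_rec list \<Rightarrow> nat \<Rightarrow> (nat \<Rightarrow> model) set" where
  "Bset Act H N Qc Tu \<beta> recs 0 = Tu"
| "Bset Act H N Qc Tu \<beta> recs (Suc j) =
     {\<theta>\<in>Tu. loglik Act H N Qc \<theta> (take (Suc j) recs)
              \<ge> (SUP \<theta>'\<in>Tu. loglik Act H N Qc \<theta>' (take (Suc j) recs)) - ereal \<beta>}
     \<inter> Bset Act H N Qc Tu \<beta> recs j"

definition sel_obj ::
  "nat set \<Rightarrow> nat set \<Rightarrow> nat \<Rightarrow> nat \<Rightarrow> (nat \<Rightarrow> model) set \<Rightarrow> (nat \<Rightarrow> policy) \<Rightarrow> real" where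
  "sel_obj Obs Act H N B \<pi>s =
     (SUP p\<in>B \<times> B. \<Sum>n<N. DTV Obs Act H (Plaw H (fst p n) (\<pi>s n)) (Plaw H (snd p n) (\<pi>s n)))"

definition policy_tuples :: "nat set \<Rightarrow> nat \<Rightarrow> (nat \<Rightarrow> policy) set" where
  "policy_tuples Act N = {\<pi>s. \<forall>n<N. \<pi>s n \<in> policies Act}"

definition model_tuples :: "model set \<Rightarrow> nat \<Rightarrow> (nat \<Rightarrow> model) set" where
  "model_tuples Th N = {\<theta>. \<forall>n<N. \<theta> n \<in> Th}"

definition valid_selection ::
  "nat set \<Rightarrow> nat set \<Rightarrow> nat \<Rightarrow> nat \<Rightarrow> ((nat \<Rightarrow> model) set \<Rightarrow> (nat \<Rightarrow> policy)) \<Rightarrow> bool" where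
  "valid_selection Obs Act H N sel =
     (\<forall>B. sel B \<in> policy_tuples Act N \<and>
          ((\<exists>\<pi>s\<in>policy_tuples Act N. \<forall>\<pi>s'\<in>policy_tuples Act N. sel_obj Obs Act H N B \<pi>s' \<le> sel_obj Obs Act H N B \<pi>s)
           \<longrightarrow> (\<forall>\<pi>s'\<in>policy_tuples Act N. sel_obj Obs Act H N B \<pi>s' \<le> sel_obj Obs Act H N B (sel B))))"

fun umt_run ::
  "nat set \<Rightarrow> nat \<Rightarrow> nat \<Rightarrow> (nat \<Rightarrow> nat \<Rightarrow> nat list set) \<Rightarrow> (nat \<Rightarrow> model) set \<Rightarrow> real \<Rightarrow>
   ((nat \<Rightarrow> model) set \<Rightarrow> (nat \<Rightarrow> policy)) \<Rightarrow> (nat \<Rightarrow> model) \<Rightarrow> nat \<Rightarrow> round_rec list pmf" where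
  "umt_run Act H N Qc Tu \<beta> sel thstar 0 = return_pmf []"
| "umt_run Act H N Qc Tu \<beta> sel thstar (Suc j) =
     bind_pmf (umt_run Act H N Qc Tu \<beta> sel thstar j) (\<lambda>recs.
       (let \<pi>s = sel (Bset Act H N Qc Tu \<beta> recs j) in
        map_pmf (\<lambda>D. recs @ [(\<pi>s, D)])
          (Pi_pmf ({..<N} \<times> {1..H}) []
             (\<lambda>(n, h). Plaw H (thstar n) (nu Act (Qc n h) h (\<pi>s n))))))"

end

theory Submission
  imports Defs
begin

(* Fix an eta-bracket (l, g) and an exploration policy nu, let P* be the true law of the data and
   A = sum_tau sqrt (g tau * nu tau * P* tau) the affinity between P* and the optimistic bound g * nu.
   The weight w tau = sqrt (g tau * nu tau / P* tau) * exp (1 - A) has P*-mean A * exp (1 - A) <= 1,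
   so the product of the weights of all samples of the first j rounds has mean at most 1.  Markov's
   inequality and a union bound over the N_eta brackets and the K prefixes show that with probability
   1 - delta all these products stay below a = N_eta * K / delta.  On that event take theta in the
   confidence set and a bracket covering it: every sample contributes
   D_H^2 <= 1 - A + sqrt eta <= ln (w tau) + (ln P* tau - ln P_theta tau) / 2 + sqrt eta,
   the log-weights sum to less than ln a and the log-likelihood gap is at most beta, so the sum of the
   squared Hellinger distances is at most ln a + beta / 2 + 1 <= 2 * beta. *)

lemma sqrt_divide_mult_self:
  fixes a p :: real
  assumes "0 \<le> p"
  shows "sqrt (a / p) * p = sqrt (a * p)"
proof (cases "p = 0")
  case False
  have "sqrt (a / p) * p = sqrt (a / p) * (sqrt p * sqrt p)" using assms by simp
  also have "\<dots> = sqrt (a / p * p) * sqrt p" by (simp only: real_sqrt_mult mult.assoc)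
  also have "\<dots> = sqrt (a * p)" using False by (simp add: real_sqrt_mult)
  finally show ?thesis .
qed simp

lemma sum_sqrt_mult_le_of_sum_diff_le:
  fixes P G Q :: "'a \<Rightarrow> real"
  assumes "finite T" and "\<And>x. x \<in> T \<Longrightarrow> 0 \<le> P x \<and> P x \<le> G x" and "\<And>x. x \<in> T \<Longrightarrow> 0 \<le> Q x"
    and "(\<Sum>x\<in>T. Q x) \<le> 1" and "(\<Sum>x\<in>T. G x - P x) \<le> \<eta>" and "0 < \<eta>"
  shows "(\<Sum>x\<in>T. sqrt (G x * Q x)) \<le> (\<Sum>x\<in>T. sqrt (P x * Q x)) + sqrt \<eta>"
proof -
  define s where "s = sqrt \<eta>"
  have s: "0 < s" "\<eta> / s = s" using assms(6) by (auto simp: s_def real_div_sqrt)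
  have "sqrt (G x * Q x) \<le> sqrt (P x * Q x) + ((G x - P x) / s + s * Q x) / 2" if x: "x \<in> T" for x
  proof -
    have "sqrt (G x * Q x) = sqrt (P x * Q x + (G x - P x) * Q x)" by (simp add: algebra_simps)
    also have "\<dots> \<le> sqrt (P x * Q x) + sqrt ((G x - P x) * Q x)"
      using assms(2,3)[OF x] by (intro sqrt_add_le_add_sqrt) auto
    also have "(G x - P x) * Q x = (G x - P x) / s * (s * Q x)" using s by simp
    also have "sqrt \<dots> \<le> ((G x - P x) / s + s * Q x) / 2"
      using assms(2,3)[OF x] s by (intro arith_geo_mean_sqrt) auto
    finally show ?thesis by simp
  qed
  then have "(\<Sum>x\<in>T. sqrt (G x * Q x)) \<le>
      (\<Sum>x\<in>T. sqrt (P x * Q x) + ((G x - P x) / s + s * Q x) / 2)"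
    by (rule sum_mono)
  also have "\<dots> = (\<Sum>x\<in>T. sqrt (P x * Q x)) + ((\<Sum>x\<in>T. G x - P x) / s + s * (\<Sum>x\<in>T. Q x)) / 2"
    by (simp add: sum.distrib sum_divide_distrib[symmetric] sum_distrib_left add_divide_distrib)
  also have "\<dots> \<le> (\<Sum>x\<in>T. sqrt (P x * Q x)) + (\<eta> / s + s) / 2"
    using assms(4,5) s by (intro add_left_mono divide_right_mono add_mono mult_left_mono) auto
  finally show ?thesis using s by (simp add: s_def)
qed

lemma mult_exp_one_minus_le_one: "x * exp (1 - x) \<le> (1::real)"
proof -
  have "x * exp (1 - x) \<le> exp (x - 1) * exp (1 - x)"
    using exp_ge_add_one_self[of "x - 1"] by (intro mult_right_mono) auto
  then show ?thesis by (simp add: exp_add[symmetric])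
qed

lemma mult_sqrt_le_one:
  fixes c \<eta> :: real
  assumes "0 < c" "0 \<le> \<eta>" "\<eta> \<le> 1 / c\<^sup>2"
  shows "c * sqrt \<eta> \<le> 1"
proof -
  have "sqrt \<eta> \<le> sqrt (1 / c\<^sup>2)" using assms(3) by (rule real_sqrt_le_mono)
  also have "\<dots> = 1 / c" using assms(1) by (simp add: real_sqrt_divide)
  finally show ?thesis using assms(1) by (simp add: field_simps)
qed

lemma ln_add_ln_add_one_le:
  fixes a X :: real
  assumes "0 < a" "a \<le> X" "2 \<le> X"
  shows "ln a + ln X + 1 \<le> 4 * ln X"
proof -
  have "ln 2 \<le> ln X" using assms(3) by simp
  then have "1 \<le> 2 * ln X" using ln2_ge_two_thirds by linarith
  moreover have "ln a \<le> ln X" using assms(1,2) by simp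
  ultimately show ?thesis by linarith
qed

lemma ln_union_bound_threshold:
  fixes Nb N K H :: nat and \<delta> :: real
  assumes "1 \<le> Nb" "1 \<le> N" "1 \<le> K" "1 \<le> H" and \<delta>: "0 < \<delta>" "\<delta> < 1"
  defines "X \<equiv> real Nb * real N * real K * real H / \<delta>"
  shows "1 \<le> real Nb * real K / \<delta>" and "0 \<le> ln X"
    and "2 \<le> K \<Longrightarrow> ln (real Nb * real K / \<delta>) + ln X + 1 \<le> 4 * ln X"
proof -
  define P where "P = real Nb * real N * real K * real H"
  have "1 \<le> N * H" "1 \<le> Nb * K" "1 \<le> Nb * N * H" using assms(1-4) by (simp_all add: one_le_mult_iff)
  then have "1 \<le> real N * real H" "1 \<le> real Nb * real K" "1 \<le> real Nb * real N * real H"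
    by (metis of_nat_1 of_nat_le_iff of_nat_mult)+
  then have "real K \<le> P" and "real Nb * real K \<le> P"
    using mult_left_mono[of 1 "real Nb * real N * real H" "real K"] mult_left_mono[of 1 "real N * real H" "real Nb * real K"]
    by (simp_all add: P_def mult_ac)
  have "P * \<delta> \<le> P" using \<delta> \<open>real K \<le> P\<close> assms(3) by (intro mult_left_le) auto
  then have "P \<le> X" using \<delta> by (simp add: X_def P_def[symmetric] le_divide_eq)
  then have "real K \<le> X" using \<open>real K \<le> P\<close> by linarith
  have "real Nb * real K / \<delta> \<le> X"
    using \<delta> \<open>real Nb * real K \<le> P\<close> by (simp add: X_def P_def[symmetric] divide_right_mono)
  show "1 \<le> real Nb * real K / \<delta>" using \<open>1 \<le> real Nb * real K\<close> \<delta> by (simp add: le_divide_eq)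
  then show "0 \<le> ln X" using \<open>real Nb * real K / \<delta> \<le> X\<close> by simp
  show "ln (real Nb * real K / \<delta>) + ln X + 1 \<le> 4 * ln X" if "2 \<le> K"
    using that \<open>1 \<le> real Nb * real K / \<delta>\<close> \<open>real Nb * real K / \<delta> \<le> X\<close> \<open>real K \<le> X\<close>
    by (intro ln_add_ln_add_one_le) auto
qed

lemma measure_pmf_prob_ge_le:
  fixes u :: "'a \<Rightarrow> ennreal"
  assumes "(\<integral>\<^sup>+x. u x \<partial>measure_pmf p) \<le> 1" and "0 < a"
  shows "measure_pmf.prob p {x. ennreal a \<le> u x} \<le> 1 / a"
proof -
  let ?M = "measure_pmf p"
  have "{x. ennreal a \<le> u x} \<subseteq> {x\<in>UNIV. 1 \<le> ennreal (1 / a) * u x}"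
  proof
    fix x assume "x \<in> {x. ennreal a \<le> u x}"
    then have "ennreal (1 / a) * ennreal a \<le> ennreal (1 / a) * u x" by (intro mult_left_mono) auto
    then show "x \<in> {x\<in>UNIV. 1 \<le> ennreal (1 / a) * u x}" using assms(2) by (simp add: ennreal_mult[symmetric])
  qed
  then have "emeasure ?M {x. ennreal a \<le> u x} \<le> emeasure ?M {x\<in>UNIV. 1 \<le> ennreal (1 / a) * u x}"
    by (rule emeasure_mono) simp
  also have "\<dots> \<le> ennreal (1 / a) * (\<integral>\<^sup>+x. u x * indicator UNIV x \<partial>?M)"
    by (rule nn_integral_Markov_inequality) auto
  also have "\<dots> \<le> ennreal (1 / a)"
    using assms(1) mult_left_mono[of _ 1 "ennreal (1 / a)"] by simp
  finally show ?thesis using assms(2) by (simp add: measure_pmf.emeasure_eq_measure)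
qed

lemma measure_pmf_prob_ge_of_support_diff_subset:
  assumes "set_pmf p - B \<subseteq> G" and "measure_pmf.prob p B \<le> \<delta>"
  shows "1 - \<delta> \<le> measure_pmf.prob p G"
proof -
  have "measure_pmf.prob p (- G) \<le> measure_pmf.prob p (B \<union> - set_pmf p)"
    using assms(1) by (intro measure_pmf.finite_measure_mono) auto
  also have "\<dots> \<le> measure_pmf.prob p B + measure_pmf.prob p (- set_pmf p)"
    by (rule measure_Un_le) auto
  also have "measure_pmf.prob p (- set_pmf p) = 0"
    by (simp add: measure_pmf_zero_iff)
  finally show ?thesis
    using assms(2) measure_pmf.prob_compl[of G p] by (simp add: Compl_eq_Diff_UNIV)
qed

section \<open>Trajectory laws and log-likelihoods\<close>

lemma pmf_bind_eq_single:
  assumes "\<And>y. y \<noteq> b \<Longrightarrow> pmf (f y) x = 0"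
  shows "pmf (bind_pmf p f) x = pmf p b * pmf (f b) x"
  unfolding pmf_bind
  by (subst integral_measure_pmf_real[where A = "{b}"]) (use assms in auto)

definition step_prob :: "model \<Rightarrow> policy \<Rightarrow> hist \<Rightarrow> nat \<Rightarrow> real" where
  "step_prob \<theta> \<pi> \<tau> t =
     pmf (\<theta> (take t \<tau>)) (fst (\<tau> ! t)) * pmf (\<pi> (take t \<tau>) (fst (\<tau> ! t))) (snd (\<tau> ! t))"

lemma pmf_traj:
  "pmf (traj m \<theta> \<pi> hs) \<tau> =
     (if length \<tau> = length hs + m \<and> take (length hs) \<tau> = hs
      then \<Prod>t\<in>{length hs..<length \<tau>}. step_prob \<theta> \<pi> \<tau> t else 0)"
proof (induction m arbitrary: hs)
  case 0
  then show ?case by (auto simp: indicator_def)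
next
  case (Suc m)
  define L where "L = length hs"
  show ?case
  proof (cases "length \<tau> = L + Suc m \<and> take L \<tau> = hs")
    case True
    then have L: "L < length \<tau>" and next_prefix: "take (Suc L) \<tau> = hs @ [\<tau> ! L]"
      by (auto simp: take_Suc_conv_app_nth)
    have extended: "pmf (traj m \<theta> \<pi> (hs @ [(ob, a)])) \<tau> =
        (if (ob, a) = \<tau> ! L then \<Prod>t\<in>{Suc L..<length \<tau>}. step_prob \<theta> \<pi> \<tau> t else 0)" for ob a
      using Suc.IH[of "hs @ [(ob, a)]"] True next_prefix by (auto simp: L_def)
    define R where "R = (\<Prod>t\<in>{Suc L..<length \<tau>}. step_prob \<theta> \<pi> \<tau> t)"
    have action_step: "pmf (bind_pmf (\<pi> hs ob) (\<lambda>a. traj m \<theta> \<pi> (hs @ [(ob, a)]))) \<tau> =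
        (if ob = fst (\<tau> ! L) then pmf (\<pi> hs ob) (snd (\<tau> ! L)) * R else 0)" for ob
      by (subst pmf_bind_eq_single[where b = "snd (\<tau> ! L)"]) (auto simp: extended R_def prod_eq_iff)
    have "pmf (traj (Suc m) \<theta> \<pi> hs) \<tau> =
        pmf (\<theta> hs) (fst (\<tau> ! L)) * (pmf (\<pi> hs (fst (\<tau> ! L))) (snd (\<tau> ! L)) * R)"
      unfolding traj.simps
      by (subst pmf_bind_eq_single[where b = "fst (\<tau> ! L)"]) (auto simp: action_step)
    also have "\<dots> = (\<Prod>t\<in>{L..<length \<tau>}. step_prob \<theta> \<pi> \<tau> t)"
      using L True by (simp add: R_def prod.atLeast_Suc_lessThan step_prob_def)
    finally show ?thesis using True by (simp add: L_def)
  next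
    case False
    have "pmf (traj m \<theta> \<pi> (hs @ [(ob, a)])) \<tau> = 0" for ob a
      using Suc.IH[of "hs @ [(ob, a)]"] False by (auto simp: L_def min_def dest: arg_cong[where f = "take L"])
    then have "pmf (traj (Suc m) \<theta> \<pi> hs) \<tau> = 0" by (simp add: pmf_bind)
    with False show ?thesis unfolding L_def by (subst if_not_P) auto
  qed
qed

lemma pmf_Plaw:
  "pmf (Plaw H \<theta> \<pi>) \<tau> = (if length \<tau> = H then obsprob \<theta> \<tau> * polprob \<pi> \<tau> else 0)"
  unfolding Plaw_def pmf_traj obsprob_def polprob_def
  by (simp add: step_prob_def prod.distrib atLeast0LessThan)

lemma finite_trajs: "finite Obs \<Longrightarrow> finite Act \<Longrightarrow> finite (trajs Obs Act H)"
  unfolding trajs_def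
  by (rule finite_subset[OF _ finite_lists_length_eq[of "Obs \<times> Act" H]]) auto

lemma set_pmf_Plaw_subset_trajs:
  assumes "\<theta> \<in> valid_models Obs" and "\<And>hs ob. length hs < H \<Longrightarrow> set_pmf (\<pi> hs ob) \<subseteq> Act"
  shows "set_pmf (Plaw H \<theta> \<pi>) \<subseteq> trajs Obs Act H"
proof
  fix \<tau> assume "\<tau> \<in> set_pmf (Plaw H \<theta> \<pi>)"
  then have len: "length \<tau> = H" and obs: "obsprob \<theta> \<tau> \<noteq> 0" and act: "polprob \<pi> \<tau> \<noteq> 0"
    by (auto simp: set_pmf_eq pmf_Plaw split: if_splits)
  have "\<tau> ! i \<in> Obs \<times> Act" if i: "i < length \<tau>" for i
  proof -
    have "fst (\<tau> ! i) \<in> set_pmf (\<theta> (take i \<tau>))" and "snd (\<tau> ! i) \<in> set_pmf (\<pi> (take i \<tau>) (fst (\<tau> ! i)))"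
      using obs act i by (auto simp: obsprob_def polprob_def set_pmf_eq)
    moreover have "set_pmf (\<pi> (take i \<tau>) (fst (\<tau> ! i))) \<subseteq> Act"
      using assms(2) i len by simp
    ultimately show ?thesis using assms(1) by (auto simp: valid_models_def mem_Times_iff)
  qed
  then show "\<tau> \<in> trajs Obs Act H" unfolding trajs_def set_conv_nth using len by blast
qed

lemma set_pmf_nu_subset:
  assumes "finite Act" "Act \<noteq> {}" "\<pi> \<in> policies Act"
    and "Q \<subseteq> {q. length q = H - h \<and> set q \<subseteq> Act}" and "length hs < H"
  shows "set_pmf (nu Act Q h \<pi> hs ob) \<subseteq> Act"
proof -
  define t where "t = length hs + 1"
  define C where "C = {q\<in>Q. take (t - h - 1) q = map snd (drop h hs)}"
  have "finite C"
    using assms(4) by (auto simp: C_def intro: finite_subset[OF _ finite_lists_length_eq[OF assms(1)]])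
  have "q ! (t - h - 1) \<in> Act" if "q \<in> C" "h < t" for q
  proof -
    have "length q = H - h" "set q \<subseteq> Act" using that(1) assms(4) by (auto simp: C_def)
    moreover have "t - h - 1 < H - h" using that(2) assms(5) by (simp add: t_def)
    ultimately show ?thesis by (metis nth_mem subsetD)
  qed
  then have "set_pmf (map_pmf (\<lambda>q. q ! (t - h - 1)) (pmf_of_set C)) \<subseteq> Act" if "C \<noteq> {}" "h < t"
    using that \<open>finite C\<close> by auto
  then show ?thesis
    using assms(1-3) unfolding nu_def Let_def t_def[symmetric] C_def[symmetric]
    by (auto simp: policies_def)
qed

(* The width of an eta-bracket is only controlled for policies in policies Act, while nu may play
   junk actions on histories of length >= H, where the core action sequence is exhausted; such
   histories never occur inside trajectories of length H. *)
definition truncate_policy :: "nat set \<Rightarrow> nat \<Rightarrow> policy \<Rightarrow> policy" where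
  "truncate_policy Act H \<pi> hs ob = (if length hs < H then \<pi> hs ob else pmf_of_set Act)"

lemma truncate_policy_in_policies:
  assumes "finite Act" "Act \<noteq> {}" "\<And>hs ob. length hs < H \<Longrightarrow> set_pmf (\<pi> hs ob) \<subseteq> Act"
  shows "truncate_policy Act H \<pi> \<in> policies Act"
  using assms by (auto simp: truncate_policy_def policies_def)

lemma polprob_truncate_policy: "length \<tau> = H \<Longrightarrow> polprob (truncate_policy Act H \<pi>) \<tau> = polprob \<pi> \<tau>"
  unfolding polprob_def by (intro prod.cong) (auto simp: truncate_policy_def)

lemma set_pmf_umt_run:
  assumes "recs \<in> set_pmf (umt_run Act H N Qc Tu \<beta> sel thstar m)"
  shows "length recs = m \<and> (\<forall>t<m. fst (recs ! t) \<in> range sel \<and> (\<forall>n<N. \<forall>h\<in>{1..H}.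
           snd (recs ! t) (n, h) \<in> set_pmf (Plaw H (thstar n) (nu Act (Qc n h) h (fst (recs ! t) n)))))"
  using assms
proof (induction m arbitrary: recs)
  case (Suc m)
  from Suc.prems obtain rs D where rs: "rs \<in> set_pmf (umt_run Act H N Qc Tu \<beta> sel thstar m)"
    and D: "D \<in> set_pmf (Pi_pmf ({..<N} \<times> {1..H}) []
             (\<lambda>(n, h). Plaw H (thstar n) (nu Act (Qc n h) h (sel (Bset Act H N Qc Tu \<beta> rs m) n))))"
    and recs: "recs = rs @ [(sel (Bset Act H N Qc Tu \<beta> rs m), D)]"
    by (auto simp: Let_def)
  show ?case
    using Suc.IH[OF rs] D unfolding recs
    by (auto simp: nth_append less_Suc_eq set_Pi_pmf PiE_dflt_def)
qed simp

lemma Bset_subset: "Bset Act H N Qc Tu \<beta> recs j \<subseteq> Tu"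
  by (cases j) auto

lemma sum_ereal_eq_MInfty_iff:
  fixes f :: "'a \<Rightarrow> ereal"
  assumes "finite A" and "\<And>x. x \<in> A \<Longrightarrow> f x \<noteq> \<infinity>"
  shows "sum f A = -\<infinity> \<longleftrightarrow> (\<exists>x\<in>A. f x = -\<infinity>)"
proof -
  have "sum f A \<noteq> \<infinity>" using assms by (subst sum_Pinfty) auto
  moreover have "\<bar>f x\<bar> = \<infinity> \<longleftrightarrow> f x = -\<infinity>" if "x \<in> A" for x
    using assms(2)[OF that] by (cases "f x") auto
  ultimately show ?thesis
    using sum_Inf[of f A] assms(1) by (cases "sum f A") auto
qed

lemma loglik_conv_nth:
  "loglik Act H N Qc \<theta> rs = (\<Sum>t<length rs. \<Sum>n<N. \<Sum>h\<in>{1..H}.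
     elog (pmf (Plaw H (\<theta> n) (nu Act (Qc n h) h (fst (rs ! t) n))) (snd (rs ! t) (n, h))))"
  unfolding loglik_def sum_list_sum_nth by (simp add: atLeast0LessThan)

lemma loglik_neq_MInfty_iff:
  "loglik Act H N Qc \<theta> rs \<noteq> -\<infinity> \<longleftrightarrow> (\<forall>t<length rs. \<forall>n<N. \<forall>h\<in>{1..H}.
     0 < pmf (Plaw H (\<theta> n) (nu Act (Qc n h) h (fst (rs ! t) n))) (snd (rs ! t) (n, h)))"
  unfolding loglik_conv_nth
  by (auto simp: sum_ereal_eq_MInfty_iff sum_Pinfty elog_def not_less less_le)

lemma loglik_eq_sum_ln:
  assumes "loglik Act H N Qc \<theta> rs \<noteq> -\<infinity>"
  shows "loglik Act H N Qc \<theta> rs = ereal (\<Sum>t<length rs. \<Sum>n<N. \<Sum>h\<in>{1..H}.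
     ln (pmf (Plaw H (\<theta> n) (nu Act (Qc n h) h (fst (rs ! t) n))) (snd (rs ! t) (n, h))))"
  using assms[unfolded loglik_neq_MInfty_iff] unfolding loglik_conv_nth sum_ereal[symmetric]
  by (intro sum.cong refl) (auto simp: elog_def)

section \<open>Likelihood-ratio weights\<close>

definition upper_lik :: "nat set \<Rightarrow> nat set \<Rightarrow> nat \<Rightarrow> (hist \<Rightarrow> real) \<Rightarrow> policy \<Rightarrow> hist \<Rightarrow> real" where
  "upper_lik Obs Act H g \<nu> \<tau> = (if \<tau> \<in> trajs Obs Act H then g \<tau> * polprob \<nu> \<tau> else 0)"

definition upper_affinity :: "nat set \<Rightarrow> nat set \<Rightarrow> nat \<Rightarrow> (hist \<Rightarrow> real) \<Rightarrow> model \<Rightarrow> policy \<Rightarrow> real" where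
  "upper_affinity Obs Act H g \<theta> \<nu> =
     (\<Sum>\<tau>\<in>trajs Obs Act H. sqrt (upper_lik Obs Act H g \<nu> \<tau> * pmf (Plaw H \<theta> \<nu>) \<tau>))"

definition lik_weight :: "nat set \<Rightarrow> nat set \<Rightarrow> nat \<Rightarrow> (hist \<Rightarrow> real) \<Rightarrow> model \<Rightarrow> policy \<Rightarrow> hist \<Rightarrow> real" where
  "lik_weight Obs Act H g \<theta> \<nu> \<tau> =
     sqrt (upper_lik Obs Act H g \<nu> \<tau> / pmf (Plaw H \<theta> \<nu>) \<tau>) * exp (1 - upper_affinity Obs Act H g \<theta> \<nu>)"

definition round_weight ::
  "nat set \<Rightarrow> nat set \<Rightarrow> nat \<Rightarrow> nat \<Rightarrow> (nat \<Rightarrow> nat \<Rightarrow> nat list set) \<Rightarrow> (nat \<Rightarrow> model) \<Rightarrow>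
   (nat \<Rightarrow> hist \<Rightarrow> real) \<Rightarrow> round_rec \<Rightarrow> ennreal" where
  "round_weight Obs Act H N Qc \<theta>s g r = (\<Prod>x\<in>{..<N} \<times> {1..H}.
     ennreal (lik_weight Obs Act H (g (fst x)) (\<theta>s (fst x)) (nu Act (Qc (fst x) (snd x)) (snd x) (fst r (fst x))) (snd r x)))"

definition run_weight ::
  "nat set \<Rightarrow> nat set \<Rightarrow> nat \<Rightarrow> nat \<Rightarrow> (nat \<Rightarrow> nat \<Rightarrow> nat list set) \<Rightarrow> (nat \<Rightarrow> model) \<Rightarrow>
   (nat \<Rightarrow> hist \<Rightarrow> real) \<Rightarrow> round_rec list \<Rightarrow> ennreal" where
  "run_weight Obs Act H N Qc \<theta>s g recs = prod_list (map (round_weight Obs Act H N Qc \<theta>s g) recs)"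

lemma nn_integral_lik_weight_le_one:
  assumes "finite Obs" "finite Act" and "\<And>\<tau>. \<tau> \<in> trajs Obs Act H \<Longrightarrow> 0 \<le> g \<tau>"
  shows "(\<integral>\<^sup>+\<tau>. ennreal (lik_weight Obs Act H g \<theta> \<nu> \<tau>) \<partial>measure_pmf (Plaw H \<theta> \<nu>)) \<le> 1"
proof -
  let ?T = "trajs Obs Act H"
  let ?A = "upper_affinity Obs Act H g \<theta> \<nu>"
  have lik_nonneg: "0 \<le> upper_lik Obs Act H g \<nu> \<tau>" for \<tau>
    using assms(3) by (auto simp: upper_lik_def polprob_def intro!: mult_nonneg_nonneg prod_nonneg)
  have "(\<integral>\<^sup>+\<tau>. ennreal (lik_weight Obs Act H g \<theta> \<nu> \<tau>) \<partial>measure_pmf (Plaw H \<theta> \<nu>)) =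
      (\<Sum>\<tau>\<in>?T. ennreal (lik_weight Obs Act H g \<theta> \<nu> \<tau>) * pmf (Plaw H \<theta> \<nu>) \<tau>)"
    using finite_trajs[OF assms(1,2)]
    by (intro nn_integral_measure_pmf_support) (auto simp: lik_weight_def upper_lik_def)
  also have "\<dots> = (\<Sum>\<tau>\<in>?T. ennreal (sqrt (upper_lik Obs Act H g \<nu> \<tau> * pmf (Plaw H \<theta> \<nu>) \<tau>) * exp (1 - ?A)))"
  proof (rule sum.cong[OF refl])
    fix \<tau>
    have "lik_weight Obs Act H g \<theta> \<nu> \<tau> * pmf (Plaw H \<theta> \<nu>) \<tau> =
        sqrt (upper_lik Obs Act H g \<nu> \<tau> * pmf (Plaw H \<theta> \<nu>) \<tau>) * exp (1 - ?A)"
      using sqrt_divide_mult_self[of "pmf (Plaw H \<theta> \<nu>) \<tau>" "upper_lik Obs Act H g \<nu> \<tau>"]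
      by (simp add: lik_weight_def mult_ac)
    then show "ennreal (lik_weight Obs Act H g \<theta> \<nu> \<tau>) * pmf (Plaw H \<theta> \<nu>) \<tau> =
        ennreal (sqrt (upper_lik Obs Act H g \<nu> \<tau> * pmf (Plaw H \<theta> \<nu>) \<tau>) * exp (1 - ?A))"
      by (simp add: ennreal_mult''[symmetric])
  qed
  also have "\<dots> = ennreal (\<Sum>\<tau>\<in>?T. sqrt (upper_lik Obs Act H g \<nu> \<tau> * pmf (Plaw H \<theta> \<nu>) \<tau>) * exp (1 - ?A))"
    using lik_nonneg by (intro sum_ennreal) simp
  also have "\<dots> = ennreal (?A * exp (1 - ?A))"
    by (simp add: upper_affinity_def sum_distrib_right)
  also have "\<dots> \<le> 1"
    using mult_exp_one_minus_le_one by simp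
  finally show ?thesis .
qed

lemma nn_integral_round_weight_le_one:
  assumes "finite Obs" "finite Act" and "\<And>n \<tau>. n < N \<Longrightarrow> \<tau> \<in> trajs Obs Act H \<Longrightarrow> 0 \<le> g n \<tau>"
  shows "(\<integral>\<^sup>+D. round_weight Obs Act H N Qc \<theta>s g (\<pi>s, D) \<partial>measure_pmf (Pi_pmf ({..<N} \<times> {1..H}) []
           (\<lambda>(n, h). Plaw H (\<theta>s n) (nu Act (Qc n h) h (\<pi>s n))))) \<le> 1"
  unfolding round_weight_def fst_conv snd_conv
  by (subst nn_integral_prod_Pi_pmf)
     (auto intro!: prod_le_1 nn_integral_lik_weight_le_one assms simp: split_beta)

lemma nn_integral_run_weight_le_one:
  assumes "finite Obs" "finite Act" and "\<And>n \<tau>. n < N \<Longrightarrow> \<tau> \<in> trajs Obs Act H \<Longrightarrow> 0 \<le> g n \<tau>"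
  shows "(\<integral>\<^sup>+recs. run_weight Obs Act H N Qc thstar g (take j recs)
           \<partial>measure_pmf (umt_run Act H N Qc Tu \<beta> sel thstar m)) \<le> 1"
proof (induction m)
  case (Suc m)
  let ?W = "run_weight Obs Act H N Qc thstar g"
  let ?R = "umt_run Act H N Qc Tu \<beta> sel thstar m"
  let ?\<pi>s = "\<lambda>rs. sel (Bset Act H N Qc Tu \<beta> rs m)"
  let ?D = "\<lambda>rs. Pi_pmf ({..<N} \<times> {1..H}) [] (\<lambda>(n, h). Plaw H (thstar n) (nu Act (Qc n h) h (?\<pi>s rs n)))"
  have "(\<integral>\<^sup>+D. ?W (take j (rs @ [(?\<pi>s rs, D)])) \<partial>measure_pmf (?D rs)) \<le> ?W (take j rs)"
    if "rs \<in> set_pmf ?R" for rs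
  proof (cases "j \<le> m")
    case True
    then show ?thesis using set_pmf_umt_run[OF that] by (simp add: measure_pmf.emeasure_space_1)
  next
    case False
    then have "(\<integral>\<^sup>+D. ?W (take j (rs @ [(?\<pi>s rs, D)])) \<partial>measure_pmf (?D rs)) =
        ?W rs * (\<integral>\<^sup>+D. round_weight Obs Act H N Qc thstar g (?\<pi>s rs, D) \<partial>measure_pmf (?D rs))"
      using set_pmf_umt_run[OF that] by (simp add: run_weight_def nn_integral_cmult)
    also have "\<dots> \<le> ?W rs"
      using nn_integral_round_weight_le_one[OF assms] mult_left_mono[of _ 1 "?W rs"] by simp
    finally show ?thesis using False set_pmf_umt_run[OF that] by simp
  qed
  then have "(\<integral>\<^sup>+recs. ?W (take j recs) \<partial>measure_pmf (umt_run Act H N Qc Tu \<beta> sel thstar (Suc m))) \<le>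
      (\<integral>\<^sup>+rs. ?W (take j rs) \<partial>measure_pmf ?R)"
    by (simp add: Let_def nn_integral_mono_AE AE_measure_pmf_iff)
  then show ?case using Suc.IH by simp
qed (simp add: run_weight_def)

lemma prob_run_weight_exceeds_le:
  assumes "finite Obs" "finite Act" "finite Gs" "0 < a"
    and "\<And>g n \<tau>. g \<in> Gs \<Longrightarrow> n < N \<Longrightarrow> \<tau> \<in> trajs Obs Act H \<Longrightarrow> 0 \<le> g n \<tau>"
  shows "measure_pmf.prob (umt_run Act H N Qc Tu \<beta> sel thstar m)
      (\<Union>g\<in>Gs. \<Union>j<K. {recs. ennreal a \<le> run_weight Obs Act H N Qc thstar g (take j recs)})
    \<le> real (card Gs) * real K / a"
proof -
  let ?R = "umt_run Act H N Qc Tu \<beta> sel thstar m"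
  let ?E = "\<lambda>g j. {recs. ennreal a \<le> run_weight Obs Act H N Qc thstar g (take j recs)}"
  have "measure_pmf.prob ?R (\<Union>g\<in>Gs. \<Union>j<K. ?E g j) \<le> (\<Sum>g\<in>Gs. measure_pmf.prob ?R (\<Union>j<K. ?E g j))"
    using assms(3) by (intro measure_UNION_le) auto
  also have "\<dots> \<le> (\<Sum>g\<in>Gs. \<Sum>j<K. measure_pmf.prob ?R (?E g j))"
    by (intro sum_mono measure_UNION_le) auto
  also have "\<dots> \<le> (\<Sum>g\<in>Gs. \<Sum>j<K. 1 / a)"
    using assms by (intro sum_mono measure_pmf_prob_ge_le nn_integral_run_weight_le_one) auto
  finally show ?thesis by simp
qed

lemma pmf_Plaw_le_upper_lik:
  assumes "\<tau> \<in> trajs Obs Act H" and "obsprob \<theta> \<tau> \<le> g \<tau>"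
  shows "pmf (Plaw H \<theta> \<nu>) \<tau> \<le> upper_lik Obs Act H g \<nu> \<tau>"
  using assms by (auto simp: pmf_Plaw upper_lik_def trajs_def polprob_def intro!: mult_right_mono prod_nonneg)

lemma DH2_le_one_minus_upper_affinity:
  assumes fin: "finite Obs" "finite Act" "Act \<noteq> {}"
    and \<nu>: "\<And>hs ob. length hs < H \<Longrightarrow> set_pmf (\<nu> hs ob) \<subseteq> Act"
    and bracket: "\<And>\<tau>. \<tau> \<in> trajs Obs Act H \<Longrightarrow> l \<tau> \<le> obsprob \<theta> \<tau> \<and> obsprob \<theta> \<tau> \<le> g \<tau>"
    and width: "\<And>\<pi>. \<pi> \<in> policies Act \<Longrightarrow> (\<Sum>\<tau>\<in>trajs Obs Act H. \<bar>l \<tau> - g \<tau>\<bar> * polprob \<pi> \<tau>) < \<eta>"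
    and "0 < \<eta>"
  shows "DH2 Obs Act H (Plaw H \<theta> \<nu>) (Plaw H \<theta>' \<nu>) \<le> 1 - upper_affinity Obs Act H g \<theta>' \<nu> + sqrt \<eta>"
proof -
  let ?T = "trajs Obs Act H"
  have finT: "finite ?T" using fin(1,2) by (rule finite_trajs)
  have "(\<Sum>\<tau>\<in>?T. upper_lik Obs Act H g \<nu> \<tau> - pmf (Plaw H \<theta> \<nu>) \<tau>) \<le>
      (\<Sum>\<tau>\<in>?T. \<bar>l \<tau> - g \<tau>\<bar> * polprob (truncate_policy Act H \<nu>) \<tau>)"
  proof (rule sum_mono)
    fix \<tau> assume \<tau>: "\<tau> \<in> ?T"
    then have "upper_lik Obs Act H g \<nu> \<tau> - pmf (Plaw H \<theta> \<nu>) \<tau> = (g \<tau> - obsprob \<theta> \<tau>) * polprob \<nu> \<tau>"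
      by (simp add: upper_lik_def pmf_Plaw trajs_def algebra_simps)
    also have "\<dots> \<le> \<bar>l \<tau> - g \<tau>\<bar> * polprob \<nu> \<tau>"
      using bracket[OF \<tau>] by (intro mult_right_mono) (auto simp: polprob_def intro!: prod_nonneg)
    finally show "upper_lik Obs Act H g \<nu> \<tau> - pmf (Plaw H \<theta> \<nu>) \<tau> \<le>
        \<bar>l \<tau> - g \<tau>\<bar> * polprob (truncate_policy Act H \<nu>) \<tau>"
      using \<tau> by (simp add: polprob_truncate_policy trajs_def)
  qed
  also have "\<dots> < \<eta>"
    using fin(2,3) \<nu> by (intro width truncate_policy_in_policies)
  finally have "(\<Sum>\<tau>\<in>?T. upper_lik Obs Act H g \<nu> \<tau> - pmf (Plaw H \<theta> \<nu>) \<tau>) \<le> \<eta>" by simp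
  moreover have "(\<Sum>\<tau>\<in>?T. pmf (Plaw H \<theta>' \<nu>) \<tau>) \<le> 1"
    using finT by (metis measure_measure_pmf_finite measure_pmf.prob_le_1)
  ultimately have "upper_affinity Obs Act H g \<theta>' \<nu> \<le>
      (\<Sum>\<tau>\<in>?T. sqrt (pmf (Plaw H \<theta> \<nu>) \<tau> * pmf (Plaw H \<theta>' \<nu>) \<tau>)) + sqrt \<eta>"
    unfolding upper_affinity_def using finT bracket \<open>0 < \<eta>\<close>
    by (intro sum_sqrt_mult_le_of_sum_diff_le) (auto intro: pmf_Plaw_le_upper_lik)
  then show ?thesis by (simp add: DH2_def)
qed

lemma ln_lik_weight:
  assumes "0 < upper_lik Obs Act H g \<nu> \<tau>" and "0 < pmf (Plaw H \<theta> \<nu>) \<tau>"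
  shows "0 < lik_weight Obs Act H g \<theta> \<nu> \<tau>"
    and "ln (lik_weight Obs Act H g \<theta> \<nu> \<tau>) =
      (ln (upper_lik Obs Act H g \<nu> \<tau>) - ln (pmf (Plaw H \<theta> \<nu>) \<tau>)) / 2 + (1 - upper_affinity Obs Act H g \<theta> \<nu>)"
  using assms by (simp_all add: lik_weight_def ln_mult ln_sqrt ln_div)

lemma DH2_le_ln_lik_weight:
  assumes fin: "finite Obs" "finite Act" "Act \<noteq> {}" and "\<theta> \<in> valid_models Obs"
    and \<nu>: "\<And>hs ob. length hs < H \<Longrightarrow> set_pmf (\<nu> hs ob) \<subseteq> Act"
    and bracket: "\<And>\<tau>. \<tau> \<in> trajs Obs Act H \<Longrightarrow> l \<tau> \<le> obsprob \<theta> \<tau> \<and> obsprob \<theta> \<tau> \<le> g \<tau>"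
    and width: "\<And>\<pi>. \<pi> \<in> policies Act \<Longrightarrow> (\<Sum>\<tau>\<in>trajs Obs Act H. \<bar>l \<tau> - g \<tau>\<bar> * polprob \<pi> \<tau>) < \<eta>"
    and "0 < \<eta>" and pos: "0 < pmf (Plaw H \<theta> \<nu>) \<tau>" "0 < pmf (Plaw H \<theta>' \<nu>) \<tau>"
  shows "0 < lik_weight Obs Act H g \<theta>' \<nu> \<tau>"
    and "DH2 Obs Act H (Plaw H \<theta> \<nu>) (Plaw H \<theta>' \<nu>) \<le> ln (lik_weight Obs Act H g \<theta>' \<nu> \<tau>) +
      (ln (pmf (Plaw H \<theta>' \<nu>) \<tau>) - ln (pmf (Plaw H \<theta> \<nu>) \<tau>)) / 2 + sqrt \<eta>"
proof -
  have "\<tau> \<in> set_pmf (Plaw H \<theta> \<nu>)" using pos(1) by (simp add: set_pmf_iff)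
  then have "\<tau> \<in> trajs Obs Act H" using set_pmf_Plaw_subset_trajs[where \<pi> = \<nu>, OF assms(4) \<nu>] by blast
  then have le: "pmf (Plaw H \<theta> \<nu>) \<tau> \<le> upper_lik Obs Act H g \<nu> \<tau>"
    using bracket by (auto intro: pmf_Plaw_le_upper_lik)
  then have "0 < upper_lik Obs Act H g \<nu> \<tau>" using pos(1) by linarith
  note weight = ln_lik_weight[OF this pos(2)]
  show "0 < lik_weight Obs Act H g \<theta>' \<nu> \<tau>" by (fact weight(1))
  have "ln (pmf (Plaw H \<theta> \<nu>) \<tau>) \<le> ln (upper_lik Obs Act H g \<nu> \<tau>)" using le pos(1) by simp
  moreover have "DH2 Obs Act H (Plaw H \<theta> \<nu>) (Plaw H \<theta>' \<nu>) \<le> 1 - upper_affinity Obs Act H g \<theta>' \<nu> + sqrt \<eta>"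
    by (rule DH2_le_one_minus_upper_affinity) (fact assms)+
  ultimately show "DH2 Obs Act H (Plaw H \<theta> \<nu>) (Plaw H \<theta>' \<nu>) \<le> ln (lik_weight Obs Act H g \<theta>' \<nu> \<tau>) +
      (ln (pmf (Plaw H \<theta>' \<nu>) \<tau>) - ln (pmf (Plaw H \<theta> \<nu>) \<tau>)) / 2 + sqrt \<eta>"
    using weight(2) by (simp add: field_simps)
qed

lemma sum_ln_lik_weight_less:
  assumes W: "run_weight Obs Act H N Qc \<theta>s g rs < ennreal a"
    and pos: "\<And>t n h. t < length rs \<Longrightarrow> n < N \<Longrightarrow> h \<in> {1..H} \<Longrightarrow>
      0 < lik_weight Obs Act H (g n) (\<theta>s n) (nu Act (Qc n h) h (fst (rs ! t) n)) (snd (rs ! t) (n, h))"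
  shows "(\<Sum>t<length rs. \<Sum>n<N. \<Sum>h\<in>{1..H}.
      ln (lik_weight Obs Act H (g n) (\<theta>s n) (nu Act (Qc n h) h (fst (rs ! t) n)) (snd (rs ! t) (n, h)))) < ln a"
proof -
  define w where "w t x = lik_weight Obs Act H (g (fst x)) (\<theta>s (fst x))
      (nu Act (Qc (fst x) (snd x)) (snd x) (fst (rs ! t) (fst x))) (snd (rs ! t) x)" for t x
  have w_pos: "0 < w t x" if "t < length rs" "x \<in> {..<N} \<times> {1..H}" for t x
    using pos that by (auto simp: w_def)
  define P where "P = (\<Prod>t<length rs. \<Prod>x\<in>{..<N} \<times> {1..H}. w t x)"
  have "run_weight Obs Act H N Qc \<theta>s g rs = (\<Prod>t<length rs. \<Prod>x\<in>{..<N} \<times> {1..H}. ennreal (w t x))"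
    by (simp add: run_weight_def round_weight_def prod.list_conv_set_nth atLeast0LessThan w_def)
  also have "\<dots> = (\<Prod>t<length rs. ennreal (\<Prod>x\<in>{..<N} \<times> {1..H}. w t x))"
    using w_pos by (intro prod.cong refl prod_ennreal) (auto intro: less_imp_le)
  also have "\<dots> = ennreal P"
    unfolding P_def using w_pos by (intro prod_ennreal prod_nonneg) (auto intro: less_imp_le)
  moreover have "0 < P" unfolding P_def using w_pos by (auto intro!: prod_pos)
  ultimately have "ln P < ln a" using W by (simp add: ennreal_less_iff)
  moreover have "ln P = (\<Sum>t<length rs. \<Sum>x\<in>{..<N} \<times> {1..H}. ln (w t x))"
  proof -
    have w_ne: "w t x \<noteq> 0" if "t < length rs" "x \<in> {..<N} \<times> {1..H}" for t x
      using w_pos[OF that] by simp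
    have "ln P = (\<Sum>t<length rs. ln (\<Prod>x\<in>{..<N} \<times> {1..H}. w t x))"
      unfolding P_def using w_ne by (intro ln_prod) simp_all
    also have "\<dots> = (\<Sum>t<length rs. \<Sum>x\<in>{..<N} \<times> {1..H}. ln (w t x))"
      by (intro sum.cong refl ln_prod w_ne) simp_all
    finally show ?thesis .
  qed
  moreover have "(\<Sum>t<length rs. \<Sum>x\<in>{..<N} \<times> {1..H}. ln (w t x)) = (\<Sum>t<length rs. \<Sum>n<N. \<Sum>h\<in>{1..H}.
      ln (lik_weight Obs Act H (g n) (\<theta>s n) (nu Act (Qc n h) h (fst (rs ! t) n)) (snd (rs ! t) (n, h))))"
    unfolding w_def by (intro sum.cong refl) (simp add: sum.cartesian_product case_prod_unfold)
  ultimately show ?thesis by simp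
qed

section \<open>Confidence sets of UMT-PSR\<close>

definition hellinger_sum ::
  "nat set \<Rightarrow> nat set \<Rightarrow> nat \<Rightarrow> nat \<Rightarrow> (nat \<Rightarrow> nat \<Rightarrow> nat list set) \<Rightarrow> (nat \<Rightarrow> model) \<Rightarrow> (nat \<Rightarrow> model) \<Rightarrow>
   round_rec list \<Rightarrow> nat \<Rightarrow> real" where
  "hellinger_sum Obs Act H N Qc \<theta> \<theta>' recs j = (\<Sum>n<N. \<Sum>t<j. \<Sum>h\<in>{1..H}.
     DH2 Obs Act H (Plaw H (\<theta> n) (nu Act (Qc n h) h (fst (recs ! t) n)))
                   (Plaw H (\<theta>' n) (nu Act (Qc n h) h (fst (recs ! t) n))))"

locale umt_psr =
  fixes Obs Act :: "nat set" and H N :: nat and Tu :: "(nat \<Rightarrow> model) set" and thstar :: "nat \<Rightarrow> model"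
    and Qc :: "nat \<Rightarrow> nat \<Rightarrow> nat list set" and sel :: "(nat \<Rightarrow> model) set \<Rightarrow> nat \<Rightarrow> policy"
  assumes finite_Obs: "finite Obs" and finite_Act: "finite Act" and Act_not_empty: "Act \<noteq> {}"
    and Tu_valid: "\<And>\<theta> n. \<theta> \<in> Tu \<Longrightarrow> n < N \<Longrightarrow> \<theta> n \<in> valid_models Obs"
    and thstar_in_Tu: "thstar \<in> Tu"
    and core_actions: "\<And>n h. n < N \<Longrightarrow> h \<in> {1..H} \<Longrightarrow> Qc n h \<subseteq> {q. length q = H - h \<and> set q \<subseteq> Act}"
    and sel_policies: "\<And>B n. n < N \<Longrightarrow> sel B n \<in> policies Act"
begin

lemma set_pmf_nu_round:
  assumes "recs \<in> set_pmf (umt_run Act H N Qc Tu \<beta> sel thstar m)" "t < m" "n < N" "h \<in> {1..H}"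
    and "length hs < H"
  shows "set_pmf (nu Act (Qc n h) h (fst (recs ! t) n) hs ob) \<subseteq> Act"
proof -
  obtain B where "fst (recs ! t) = sel B" using set_pmf_umt_run[OF assms(1)] assms(2) by blast
  then show ?thesis
    using assms(3-5) by (intro set_pmf_nu_subset finite_Act Act_not_empty) (simp_all add: sel_policies core_actions)
qed

lemma loglik_gap_Bset:
  assumes recs: "recs \<in> set_pmf (umt_run Act H N Qc Tu \<beta> sel thstar m)" and j: "0 < j" "j \<le> m"
    and \<theta>: "\<theta> \<in> Bset Act H N Qc Tu \<beta> recs j"
  shows "\<And>t n h. t < j \<Longrightarrow> n < N \<Longrightarrow> h \<in> {1..H} \<Longrightarrow>
      0 < pmf (Plaw H (\<theta> n) (nu Act (Qc n h) h (fst (recs ! t) n))) (snd (recs ! t) (n, h))"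
    and "(\<Sum>t<j. \<Sum>n<N. \<Sum>h\<in>{1..H}.
        ln (pmf (Plaw H (thstar n) (nu Act (Qc n h) h (fst (recs ! t) n))) (snd (recs ! t) (n, h)))) - \<beta> \<le>
      (\<Sum>t<j. \<Sum>n<N. \<Sum>h\<in>{1..H}.
        ln (pmf (Plaw H (\<theta> n) (nu Act (Qc n h) h (fst (recs ! t) n))) (snd (recs ! t) (n, h))))"
proof -
  let ?rs = "take j recs"
  let ?L = "\<lambda>\<theta>'. loglik Act H N Qc \<theta>' ?rs"
  let ?ln = "\<lambda>\<theta>'. \<Sum>t<j. \<Sum>n<N. \<Sum>h\<in>{1..H}.
      ln (pmf (Plaw H (\<theta>' n) (nu Act (Qc n h) h (fst (recs ! t) n))) (snd (recs ! t) (n, h)))"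
  have "j \<le> length recs" using set_pmf_umt_run[OF recs] j by simp
  then have len: "length ?rs = j" by simp
  have finite_loglik: "?L \<theta>' \<noteq> -\<infinity> \<longleftrightarrow> (\<forall>t<j. \<forall>n<N. \<forall>h\<in>{1..H}.
      0 < pmf (Plaw H (\<theta>' n) (nu Act (Qc n h) h (fst (recs ! t) n))) (snd (recs ! t) (n, h)))" for \<theta>'
    using \<open>j \<le> length recs\<close> by (auto simp: loglik_neq_MInfty_iff len)
  have loglik_eq: "?L \<theta>' = ereal (?ln \<theta>')" if "?L \<theta>' \<noteq> -\<infinity>" for \<theta>'
    using loglik_eq_sum_ln[OF that] \<open>j \<le> length recs\<close> by (simp add: min_absorb2)
  have "?L thstar \<noteq> -\<infinity>"
    unfolding finite_loglik using set_pmf_umt_run[OF recs] j by (auto intro: pmf_positive)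
  then have "ereal (?ln thstar) = ?L thstar" by (rule loglik_eq[symmetric])
  also have "\<dots> \<le> (SUP \<theta>'\<in>Tu. ?L \<theta>')" by (rule SUP_upper[OF thstar_in_Tu])
  finally have "ereal (?ln thstar) - ereal \<beta> \<le> (SUP \<theta>'\<in>Tu. ?L \<theta>') - ereal \<beta>"
    by (intro ereal_minus_mono) auto
  also have "\<dots> \<le> ?L \<theta>"
    using \<theta> j by (cases j) auto
  finally have ge: "ereal (?ln thstar - \<beta>) \<le> ?L \<theta>" by simp
  then have "?L \<theta> \<noteq> -\<infinity>" by auto
  then show "\<And>t n h. t < j \<Longrightarrow> n < N \<Longrightarrow> h \<in> {1..H} \<Longrightarrow>
      0 < pmf (Plaw H (\<theta> n) (nu Act (Qc n h) h (fst (recs ! t) n))) (snd (recs ! t) (n, h))"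
    unfolding finite_loglik by blast
  show "?ln thstar - \<beta> \<le> ?ln \<theta>"
    using ge loglik_eq[OF \<open>?L \<theta> \<noteq> -\<infinity>\<close>] by simp
qed

lemma DH2_le_ln_lik_weight_run:
  fixes recs :: "round_rec list" and t n h :: nat
  defines "\<nu> \<equiv> nu Act (Qc n h) h (fst (recs ! t) n)" and "\<tau> \<equiv> snd (recs ! t) (n, h)"
  assumes recs: "recs \<in> set_pmf (umt_run Act H N Qc Tu \<beta> sel thstar m)" and "t < m" "n < N" "h \<in> {1..H}"
    and "\<theta> \<in> valid_models Obs"
    and bracket: "\<And>\<tau>. \<tau> \<in> trajs Obs Act H \<Longrightarrow> l \<tau> \<le> obsprob \<theta> \<tau> \<and> obsprob \<theta> \<tau> \<le> g \<tau>"
    and width: "\<And>\<pi>. \<pi> \<in> policies Act \<Longrightarrow> (\<Sum>\<tau>\<in>trajs Obs Act H. \<bar>l \<tau> - g \<tau>\<bar> * polprob \<pi> \<tau>) < \<eta>"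
    and "0 < \<eta>" and "0 < pmf (Plaw H \<theta> \<nu>) \<tau>"
  shows "0 < lik_weight Obs Act H g (thstar n) \<nu> \<tau>"
    and "DH2 Obs Act H (Plaw H \<theta> \<nu>) (Plaw H (thstar n) \<nu>) \<le> ln (lik_weight Obs Act H g (thstar n) \<nu> \<tau>) +
      (ln (pmf (Plaw H (thstar n) \<nu>) \<tau>) - ln (pmf (Plaw H \<theta> \<nu>) \<tau>)) / 2 + sqrt \<eta>"
proof -
  have "\<And>hs ob. length hs < H \<Longrightarrow> set_pmf (\<nu> hs ob) \<subseteq> Act"
    unfolding \<nu>_def using set_pmf_nu_round[OF recs assms(4-6)] .
  moreover have "0 < pmf (Plaw H (thstar n) \<nu>) \<tau>"
    using set_pmf_umt_run[OF recs] assms(4-6) by (auto simp: \<nu>_def \<tau>_def pmf_positive)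
  ultimately show "0 < lik_weight Obs Act H g (thstar n) \<nu> \<tau>"
    and "DH2 Obs Act H (Plaw H \<theta> \<nu>) (Plaw H (thstar n) \<nu>) \<le> ln (lik_weight Obs Act H g (thstar n) \<nu> \<tau>) +
      (ln (pmf (Plaw H (thstar n) \<nu>) \<tau>) - ln (pmf (Plaw H \<theta> \<nu>) \<tau>)) / 2 + sqrt \<eta>"
    using DH2_le_ln_lik_weight[where \<nu> = \<nu>, OF finite_Obs finite_Act Act_not_empty assms(7) _ bracket width]
      assms(10,11) by blast+
qed

lemma hellinger_sum_le_of_run_weight_less:
  assumes recs: "recs \<in> set_pmf (umt_run Act H N Qc Tu \<beta> sel thstar m)" and j: "0 < j" "j \<le> m"
    and \<theta>: "\<theta> \<in> Bset Act H N Qc Tu \<beta> recs j"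
    and bracket: "\<And>n \<tau>. n < N \<Longrightarrow> \<tau> \<in> trajs Obs Act H \<Longrightarrow> l n \<tau> \<le> obsprob (\<theta> n) \<tau> \<and> obsprob (\<theta> n) \<tau> \<le> g n \<tau>"
    and width: "\<And>n \<pi>. n < N \<Longrightarrow> \<pi> \<in> policies Act \<Longrightarrow>
      (\<Sum>\<tau>\<in>trajs Obs Act H. \<bar>l n \<tau> - g n \<tau>\<bar> * polprob \<pi> \<tau>) < \<eta>"
    and "0 < \<eta>" and W: "run_weight Obs Act H N Qc thstar g (take j recs) < ennreal a"
  shows "hellinger_sum Obs Act H N Qc \<theta> thstar recs j \<le> ln a + \<beta> / 2 + real j * real N * real H * sqrt \<eta>"
proof -
  define \<nu> where "\<nu> n h t = nu Act (Qc n h) h (fst (recs ! t) n)" for n h t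
  define \<tau> where "\<tau> n h t = snd (recs ! t) (n, h)" for n h t
  define w where "w n h t = lik_weight Obs Act H (g n) (thstar n) (\<nu> n h t) (\<tau> n h t)" for n h t
  define lp where "lp \<theta>' n h t = ln (pmf (Plaw H (\<theta>' n) (\<nu> n h t)) (\<tau> n h t))" for \<theta>' n h t
  have "j \<le> length recs" using set_pmf_umt_run[OF recs] j by simp
  have summand_bound: "0 < w n h t \<and> DH2 Obs Act H (Plaw H (\<theta> n) (\<nu> n h t)) (Plaw H (thstar n) (\<nu> n h t)) \<le>
      ln (w n h t) + (lp thstar n h t - lp \<theta> n h t) / 2 + sqrt \<eta>"
    if "t < j" "n < N" "h \<in> {1..H}" for t n h
  proof -
    have "\<theta> n \<in> valid_models Obs" using Bset_subset \<theta> that(2) by (intro Tu_valid) blast+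
    then show ?thesis
      using DH2_le_ln_lik_weight_run[where \<theta> = "\<theta> n" and l = "l n" and g = "g n",
          OF recs _ that(2,3) _ bracket[OF that(2)] width[OF that(2)] \<open>0 < \<eta>\<close>]
        loglik_gap_Bset(1)[OF recs j \<theta> that] that j
      unfolding w_def lp_def \<nu>_def \<tau>_def by auto
  qed
  have "hellinger_sum Obs Act H N Qc \<theta> thstar recs j
      = (\<Sum>t<j. \<Sum>n<N. \<Sum>h\<in>{1..H}. DH2 Obs Act H (Plaw H (\<theta> n) (\<nu> n h t)) (Plaw H (thstar n) (\<nu> n h t)))"
    unfolding hellinger_sum_def \<nu>_def by (rule sum.swap)
  also have "\<dots> \<le> (\<Sum>t<j. \<Sum>n<N. \<Sum>h\<in>{1..H}. ln (w n h t) + lp thstar n h t / 2 - lp \<theta> n h t / 2 + sqrt \<eta>)"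
    using summand_bound by (intro sum_mono) (simp add: diff_divide_distrib add_diff_eq)
  also have "\<dots> = (\<Sum>t<j. \<Sum>n<N. \<Sum>h\<in>{1..H}. ln (w n h t)) +
      (\<Sum>t<j. \<Sum>n<N. \<Sum>h\<in>{1..H}. lp thstar n h t) / 2 - (\<Sum>t<j. \<Sum>n<N. \<Sum>h\<in>{1..H}. lp \<theta> n h t) / 2 +
      real j * real N * real H * sqrt \<eta>"
    by (simp add: sum.distrib sum_subtractf sum_divide_distrib)
  also have "\<dots> \<le> ln a + \<beta> / 2 + real j * real N * real H * sqrt \<eta>"
  proof -
    have "(\<Sum>t<j. \<Sum>n<N. \<Sum>h\<in>{1..H}. ln (w n h t)) < ln a"
      using sum_ln_lik_weight_less[OF W] summand_bound \<open>j \<le> length recs\<close>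
      by (simp add: min_absorb2 w_def \<nu>_def \<tau>_def)
    moreover have "(\<Sum>t<j. \<Sum>n<N. \<Sum>h\<in>{1..H}. lp thstar n h t) - \<beta> \<le> (\<Sum>t<j. \<Sum>n<N. \<Sum>h\<in>{1..H}. lp \<theta> n h t)"
      using loglik_gap_Bset(2)[OF recs j \<theta>] by (simp add: lp_def \<nu>_def \<tau>_def)
    ultimately show ?thesis by simp
  qed
  finally show ?thesis .
qed

theorem prob_hellinger_sum_le_of_brackets:
  fixes K :: nat
  assumes brackets: "\<forall>b\<in>set brs. is_eta_bracket Obs Act H N \<eta> b"
    and cover: "\<forall>\<theta>\<in>Tu. \<exists>b\<in>set brs. in_bracket Obs Act H N b \<theta>"
    and "1 \<le> a" "0 \<le> \<beta>" "0 < \<eta>" and \<eta>: "real K * real N * real H * sqrt \<eta> \<le> 1"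
  shows "1 - real (length brs) * real K / a \<le> measure_pmf.prob (umt_run Act H N Qc Tu \<beta> sel thstar K)
       {recs. \<forall>k\<in>{1..K}. \<forall>\<theta>\<in>Bset Act H N Qc Tu \<beta> recs (k - 1).
          hellinger_sum Obs Act H N Qc \<theta> thstar recs (k - 1) \<le> ln a + \<beta> / 2 + 1}"
proof (rule measure_pmf_prob_ge_of_support_diff_subset)
  define Bad where "Bad = (\<Union>g\<in>snd ` set brs. \<Union>j<K.
      {recs. ennreal a \<le> run_weight Obs Act H N Qc thstar g (take j recs)})"
  have "measure_pmf.prob (umt_run Act H N Qc Tu \<beta> sel thstar K) Bad \<le> real (card (snd ` set brs)) * real K / a"
    unfolding Bad_def using brackets \<open>1 \<le> a\<close>
    by (intro prob_run_weight_exceeds_le finite_Obs finite_Act) (auto simp: is_eta_bracket_def)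
  also have "\<dots> \<le> real (length brs) * real K / a"
    using card_image_le[of "set brs" snd] card_length[of brs] \<open>1 \<le> a\<close>
    by (intro divide_right_mono mult_right_mono) auto
  finally show "measure_pmf.prob (umt_run Act H N Qc Tu \<beta> sel thstar K) Bad \<le> real (length brs) * real K / a" .
  show "set_pmf (umt_run Act H N Qc Tu \<beta> sel thstar K) - Bad \<subseteq> {recs. \<forall>k\<in>{1..K}. \<forall>\<theta>\<in>Bset Act H N Qc Tu \<beta> recs (k - 1).
          hellinger_sum Obs Act H N Qc \<theta> thstar recs (k - 1) \<le> ln a + \<beta> / 2 + 1}"
  proof (intro subsetI CollectI ballI)
    fix recs k \<theta>
    assume recs: "recs \<in> set_pmf (umt_run Act H N Qc Tu \<beta> sel thstar K) - Bad"
      and k: "k \<in> {1..K}" and \<theta>: "\<theta> \<in> Bset Act H N Qc Tu \<beta> recs (k - 1)"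
    show "hellinger_sum Obs Act H N Qc \<theta> thstar recs (k - 1) \<le> ln a + \<beta> / 2 + 1"
    proof (cases "k = 1")
      case True
      then show ?thesis using \<open>1 \<le> a\<close> \<open>0 \<le> \<beta>\<close> by (simp add: hellinger_sum_def)
    next
      case False
      then have j: "0 < k - 1" "k - 1 < K" using k by auto
      obtain b where b: "b \<in> set brs" "in_bracket Obs Act H N b \<theta>"
        using cover \<theta> Bset_subset by blast
      then have "run_weight Obs Act H N Qc thstar (snd b) (take (k - 1) recs) < ennreal a"
        using recs j unfolding Bad_def by force
      then have "hellinger_sum Obs Act H N Qc \<theta> thstar recs (k - 1) \<le> ln a + \<beta> / 2 + real (k - 1) * real N * real H * sqrt \<eta>"
        using recs j \<theta> brackets b \<open>0 < \<eta>\<close>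
        by (intro hellinger_sum_le_of_run_weight_less[where l = "fst b" and g = "snd b"])
           (auto simp: is_eta_bracket_def in_bracket_def)
      moreover have "real (k - 1) * real N * real H * sqrt \<eta> \<le> real K * real N * real H * sqrt \<eta>"
        using j \<open>0 < \<eta>\<close> by (intro mult_right_mono) auto
      ultimately show ?thesis using \<eta> by linarith
    qed
  qed
qed

theorem prob_hellinger_sum_le:
  fixes K :: nat and \<eta> \<delta> :: real
  assumes "1 \<le> H" "1 \<le> N" "1 \<le> K" and \<eta>: "0 < \<eta>" "\<eta> \<le> 1 / (real N ^ 2 * real K ^ 2 * real H ^ 2)"
    and \<delta>: "0 < \<delta>" "\<delta> < 1" and "\<exists>m. bracket_cover Obs Act H N \<eta> Tu m"
  defines "\<beta> \<equiv> 2 * ln (real (bracketing_number Obs Act H N \<eta> Tu) * real N * real K * real H / \<delta>)"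
  shows "measure_pmf.prob (umt_run Act H N Qc Tu \<beta> sel thstar K)
       {recs. \<forall>k\<in>{1..K}. \<forall>\<theta>\<in>Bset Act H N Qc Tu \<beta> recs (k - 1).
          hellinger_sum Obs Act H N Qc \<theta> thstar recs (k - 1) \<le> 2 * \<beta>}
     \<ge> 1 - \<delta>"
proof -
  define Nb where "Nb = bracketing_number Obs Act H N \<eta> Tu"
  obtain brs where "length brs = Nb" and brackets: "\<forall>b\<in>set brs. is_eta_bracket Obs Act H N \<eta> b"
    and cover: "\<forall>\<theta>\<in>Tu. \<exists>b\<in>set brs. in_bracket Obs Act H N b \<theta>"
    using LeastI_ex[OF assms(8)] unfolding Nb_def bracketing_number_def bracket_cover_def by blast
  then have "1 \<le> Nb" using thstar_in_Tu by (cases brs) auto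
  define a where "a = real Nb * real K / \<delta>"
  define X where "X = real Nb * real N * real K * real H / \<delta>"
  note threshold = ln_union_bound_threshold[OF \<open>1 \<le> Nb\<close> assms(2,3,1) \<delta>, folded a_def X_def]
  have \<beta>_X: "\<beta> = 2 * ln X" by (simp add: \<beta>_def X_def Nb_def)
  then have "0 \<le> \<beta>" using threshold(2) by simp
  have "real K * real N * real H * sqrt \<eta> \<le> 1"
    using \<eta> assms(1-3) by (intro mult_sqrt_le_one) (simp_all add: power_mult_distrib mult_ac)
  then have "1 - \<delta> \<le> measure_pmf.prob (umt_run Act H N Qc Tu \<beta> sel thstar K)
       {recs. \<forall>k\<in>{1..K}. \<forall>\<theta>\<in>Bset Act H N Qc Tu \<beta> recs (k - 1).
          hellinger_sum Obs Act H N Qc \<theta> thstar recs (k - 1) \<le> ln a + \<beta> / 2 + 1}"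
    using prob_hellinger_sum_le_of_brackets[where K = K, OF brackets cover threshold(1) \<open>0 \<le> \<beta>\<close> \<eta>(1)]
      \<open>length brs = Nb\<close> \<open>1 \<le> Nb\<close> assms(3) \<delta> by (simp add: a_def)
  also have "\<dots> \<le> measure_pmf.prob (umt_run Act H N Qc Tu \<beta> sel thstar K)
       {recs. \<forall>k\<in>{1..K}. \<forall>\<theta>\<in>Bset Act H N Qc Tu \<beta> recs (k - 1).
          hellinger_sum Obs Act H N Qc \<theta> thstar recs (k - 1) \<le> 2 * \<beta>}"
  proof (intro measure_pmf.finite_measure_mono subsetI CollectI ballI)
    fix recs k \<theta> assume "recs \<in> {recs. \<forall>k\<in>{1..K}. \<forall>\<theta>\<in>Bset Act H N Qc Tu \<beta> recs (k - 1).
          hellinger_sum Obs Act H N Qc \<theta> thstar recs (k - 1) \<le> ln a + \<beta> / 2 + 1}"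
      and k: "k \<in> {1..K}" and "\<theta> \<in> Bset Act H N Qc Tu \<beta> recs (k - 1)"
    then have bound: "hellinger_sum Obs Act H N Qc \<theta> thstar recs (k - 1) \<le> ln a + \<beta> / 2 + 1" by blast
    show "hellinger_sum Obs Act H N Qc \<theta> thstar recs (k - 1) \<le> 2 * \<beta>"
    proof (cases "k = 1")
      case True
      then show ?thesis using \<open>0 \<le> \<beta>\<close> by (simp add: hellinger_sum_def)
    next
      case False
      then have "ln a + \<beta> / 2 + 1 \<le> 2 * \<beta>" using k threshold(3) by (simp add: \<beta>_X)
      then show ?thesis using bound by linarith
    qed
  qed simp
  finally show ?thesis .
qed

end

theorem lemma1:
  "\<exists>c>0. \<forall>(Obs::nat set) (Act::nat set) (H::nat) (N::nat) (K::nat) (Th::model set)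
      (Tu::(nat \<Rightarrow> model) set) (thstar::nat \<Rightarrow> model) (Qc::nat \<Rightarrow> nat \<Rightarrow> nat list set)
      (sel::(nat \<Rightarrow> model) set \<Rightarrow> (nat \<Rightarrow> policy)) (\<eta>::real) (\<delta>::real).
    finite Obs \<and> Obs \<noteq> {} \<and> finite Act \<and> Act \<noteq> {} \<and> 1 \<le> H \<and> 1 \<le> N \<and> 1 \<le> K \<and>
    Th \<subseteq> valid_models Obs \<and>
    Tu \<subseteq> model_tuples Th N \<and> thstar \<in> Tu \<and>
    (\<forall>n<N. \<forall>h\<in>{1..H}. Qc n h \<noteq> {} \<and> Qc n h \<subseteq> {q. length q = H - h \<and> set q \<subseteq> Act}) \<and>
    valid_selection Obs Act H N sel \<and>
    0 < \<eta> \<and> \<eta> \<le> 1 / (real N ^ 2 * real K ^ 2 * real H ^ 2) \<and>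
    0 < \<delta> \<and> \<delta> < 1 \<and>
    (\<exists>m. bracket_cover Obs Act H N \<eta> Tu m)
    \<longrightarrow>
    (let \<beta> = c * ln (real (bracketing_number Obs Act H N \<eta> Tu) * real N * real K * real H / \<delta>) in
     measure_pmf.prob (umt_run Act H N Qc Tu \<beta> sel thstar K)
       {recs. \<forall>k\<in>{1..K}. \<forall>\<theta>\<in>Bset Act H N Qc Tu \<beta> recs (k - 1).
          (\<Sum>n<N. \<Sum>t<k - 1. \<Sum>h\<in>{1..H}.
             DH2 Obs Act H (Plaw H (\<theta> n) (nu Act (Qc n h) h (fst (recs ! t) n)))
                       (Plaw H (thstar n) (nu Act (Qc n h) h (fst (recs ! t) n))))
          \<le> 2 * \<beta>}
     \<ge> 1 - \<delta>)"
proof (intro exI[of _ "2::real"] conjI allI impI, goal_cases)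
  case (2 Obs Act H N K Th Tu thstar Qc sel \<eta> \<delta>)
  then interpret umt_psr Obs Act H N Tu thstar Qc sel
    by unfold_locales (auto simp: model_tuples_def valid_selection_def policy_tuples_def)
  show ?case using 2 prob_hellinger_sum_le unfolding Let_def hellinger_sum_def by auto
qed simp

end
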